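(* Let $d,n$ be positive integers with $d\le n$. Then $\mathcal{C}_d\subseteq\mathbb{Z}_{2^n}$ does not contain a projective $d$-cube, i.e.\ there is no multiset $S$ of $d$ elements of $\mathbb{Z}_{2^n}$ with $\Sigma^*S\subseteq\mathcal{C}_d$.
   Context: For a multiset $S=\{a_1,\dots,a_d\}$ of (not necessarily distinct) elements of $\mathbb{Z}_{2^n}$, $\Sigma^*S=\{\sum_{i\in I}a_i \bmod 2^n:\emptyset\ne I\subseteq[d]\}$. Layers: for $1\le i\le n$, $L_i=\{x\in\mathbb{Z}_{2^n}: x\equiv 2^{i-1}\pmod{2^i}\}$, $L_{n+1}=\{0\}$. Define index sets $I_1=\emptyset$ and, for $d\ge2$ with $\ell$ the largest integer with $2^\ell\le d$, $I_d=\{1,\dots,\ell\}\cup\{j+\ell+1: j\in I_{d-2^\ell+1}\}$; set $\mathcal{C}_d=\bigcup_{i\in I_d}L_i$ (for $d\le n$ all indices are at most $n$). *)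

theory Defs
  imports Main "HOL-Library.Multiset" "HOL-Library.Discrete_Functions"
begin

text \<open>Z_{2^n} is represented by the residues {0..<2^n}.\<close>

definition subsums :: "nat \<Rightarrow> nat multiset \<Rightarrow> nat set" where
  "subsums n S = {sum_mset T mod 2^n | T. T \<subseteq># S \<and> T \<noteq> {#}}"

definition layer :: "nat \<Rightarrow> nat \<Rightarrow> nat set" where
  "layer n i = (if i = n + 1 then {0}
     else {x. x < 2^n \<and> x mod 2^i = 2^(i - 1)})"

text \<open>largest l with 2^l <= d (for d >= 1) is floor_log d\<close>

function Iset :: "nat \<Rightarrow> nat set" where
  "Iset d = (if d \<le> 1 then {}
     else {1..floor_log d} \<union> (\<lambda>j. j + floor_log d + 1) ` Iset (d - 2 ^ floor_log d + 1))"
  by auto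
termination
proof (relation "measure id")
  fix d :: nat
  assume "\<not> d \<le> 1"
  hence d: "d \<ge> 2" by simp
  have "floor_log d \<ge> 1" using floor_log_rec[OF d] by simp
  hence "2 ^ floor_log d \<ge> (2::nat)"
    by (metis power_increasing power_one_right zero_less_numeral one_le_numeral)
  moreover have "2 ^ floor_log d \<le> d" using d floor_log_exp2_le by simp
  ultimately show "(d - 2 ^ floor_log d + 1, d) \<in> measure id" by simp
qed simp

definition Cset :: "nat \<Rightarrow> nat \<Rightarrow> nat set" where
  "Cset n d = (\<Union>i\<in>Iset d. layer n i)"

end

theory Submission
  imports Defs
begin

text \<open>
  Let \<open>2^l \<le> d < 2^(l+1)\<close> and \<open>d' = d - 2^l + 1\<close>. The layers
  of \<open>C_d\<close> are \<open>L_1, ..., L_l\<close> together with the layers of \<open>C_d'\<close> shifted up by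
  \<open>l + 1\<close>, so no subsum of a cube \<open>S\<close> with \<open>\<Sigma>*S \<subseteq> C_d\<close> is \<open>2^l\<close> modulo \<open>2^(l+1)\<close>.
  Since \<open>2^l\<close> lies in every nonzero subgroup of \<open>Z_(2^(l+1))\<close>, sets containing \<open>0\<close> whose
  sumset avoids \<open>2^l\<close> satisfy the Cauchy-Davenport bound \<open>|A + B| \<ge> |A| + |B| - 1\<close>.
  Applied to prefix sums of shortest zero-sum blocks, this splits \<open>S\<close> into at least \<open>d'\<close>
  disjoint nonempty blocks with sums divisible by \<open>2^(l+1)\<close> and at most \<open>2^l - 1\<close> leftover
  elements. The block sums divided by \<open>2^(l+1)\<close> form a cube of size \<open>d'\<close> in \<open>C_d'\<close>,
  contradicting the induction hypothesis.
\<close>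

section \<open>Sumsets in \<open>Z_N\<close> avoiding an element of every nonzero subgroup\<close>

definition sumset_mod :: "int \<Rightarrow> int set \<Rightarrow> int set \<Rightarrow> int set" where
  "sumset_mod N A B = {(a + b) mod N | a b. a \<in> A \<and> b \<in> B}"

lemma sumset_modI: "a \<in> A \<Longrightarrow> b \<in> B \<Longrightarrow> (a + b) mod N \<in> sumset_mod N A B"
  unfolding sumset_mod_def by blast

lemma sumset_modE:
  assumes "z \<in> sumset_mod N A B"
  obtains a b where "a \<in> A" "b \<in> B" "z = (a + b) mod N"
  using assms unfolding sumset_mod_def by blast

lemma sumset_mod_subset_range: "0 < N \<Longrightarrow> sumset_mod N A B \<subseteq> {0..<N}"
  unfolding sumset_mod_def by auto

lemma sumset_mod_superset_left: "0 \<in> B \<Longrightarrow> A \<subseteq> {0..<N} \<Longrightarrow> A \<subseteq> sumset_mod N A B"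
  using sumset_modI[of _ A 0 B N] by fastforce

lemma sumset_mod_dyson_transform_subset:
  assumes "e \<in> A"
  shows "sumset_mod N (A \<union> (\<lambda>b. (b + e) mod N) ` B) {b \<in> B. (b + e) mod N \<in> A}
           \<subseteq> sumset_mod N A B"
proof
  fix z assume "z \<in> sumset_mod N (A \<union> (\<lambda>b. (b + e) mod N) ` B) {b \<in> B. (b + e) mod N \<in> A}"
  then obtain a x where a: "a \<in> A \<or> (\<exists>y\<in>B. a = (y + e) mod N)"
    and x: "x \<in> B" "(x + e) mod N \<in> A" and z: "z = (a + x) mod N"
    unfolding sumset_mod_def by blast
  show "z \<in> sumset_mod N A B"
  proof (cases "a \<in> A")
    case True
    then show ?thesis using x(1) z by (simp add: sumset_modI)
  next
    case False
    then obtain y where "y \<in> B" "a = (y + e) mod N" using a by blast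
    then have "z = ((x + e) mod N + y) mod N"
      using z by (simp add: mod_simps ac_simps)
    then show ?thesis using x(2) \<open>y \<in> B\<close> by (simp add: sumset_modI)
  qed
qed

lemma card_dyson_transform:
  fixes A B :: "int set"
  assumes "finite A" "finite B" "B \<subseteq> {0..<N}"
  shows "card (A \<union> (\<lambda>b. (b + e) mod N) ` B) + card {b \<in> B. (b + e) mod N \<in> A}
           = card A + card B"
proof -
  let ?t = "\<lambda>b. (b + e) mod N"
  have inj: "inj_on ?t B"
  proof (rule inj_onI)
    fix x y assume "x \<in> B" "y \<in> B" "?t x = ?t y"
    then have "x mod N = y mod N" by (simp add: mod_eq_dvd_iff)
    moreover have "x mod N = x" "y mod N = y"
      using \<open>x \<in> B\<close> \<open>y \<in> B\<close> assms(3) by (auto intro: mod_pos_pos_trivial)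
    ultimately show "x = y" by metis
  qed
  have "inj_on ?t {b \<in> B. ?t b \<in> A}" using inj by (rule inj_on_subset) blast
  then have "card {b \<in> B. ?t b \<in> A} = card (?t ` {b \<in> B. ?t b \<in> A})"
    by (rule card_image[symmetric])
  also have "?t ` {b \<in> B. ?t b \<in> A} = A \<inter> ?t ` B" by blast
  finally have "card {b \<in> B. ?t b \<in> A} = card (A \<inter> ?t ` B)" .
  moreover have "card (A \<union> ?t ` B) + card (A \<inter> ?t ` B) = card A + card (?t ` B)"
    using assms(1,2) card_Un_Int[of A "?t ` B"] by simp
  moreover have "card (?t ` B) = card B" using inj by (rule card_image)
  ultimately show ?thesis by linarith
qed

lemma multiple_mod_mem_if_closed:
  assumes "0 \<in> A" "\<And>a. a \<in> A \<Longrightarrow> (a + b) mod N \<in> A"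
  shows "(int m * b) mod N \<in> A"
proof (induction m)
  case 0
  then show ?case using assms(1) by simp
next
  case (Suc m)
  have "(int (Suc m) * b) mod N = ((int m * b) mod N + b) mod N"
    by (simp add: algebra_simps mod_simps)
  then show ?case using assms(2) Suc.IH by simp
qed

text \<open>\<open>h\<close> lies in every nonzero subgroup of \<open>Z_N\<close>, e.g. \<open>N = 2^k\<close> and \<open>h = 2^(k-1)\<close>.\<close>

locale unavoidable_residue =
  fixes N h :: int
  assumes modulus_pos: "0 < N"
    and multiple_mod_eq: "\<And>b. 0 < b \<Longrightarrow> b < N \<Longrightarrow> \<exists>m. (int m * b) mod N = h"

text \<open>
  Dyson transforms shrink \<open>B\<close> without changing \<open>|A| + |B|\<close> or enlarging the sumset. When
  none applies, \<open>A\<close> is closed under adding elements of \<open>B\<close>, so it contains all multiples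
  of some nonzero \<open>b\<close>, in particular \<open>h\<close>.
\<close>

lemma (in unavoidable_residue) card_sumset_mod_ge:
  assumes "finite A" "finite B" "A \<subseteq> {0..<N}" "B \<subseteq> {0..<N}" "0 \<in> A" "0 \<in> B"
    and "h \<notin> sumset_mod N A B"
  shows "card A + card B \<le> card (sumset_mod N A B) + 1"
  using assms
proof (induction "card B" arbitrary: A B rule: less_induct)
  case less
  have fin: "finite (sumset_mod N A B)"
    using sumset_mod_subset_range[OF modulus_pos] finite_subset by blast
  show ?case
  proof (cases "\<exists>e\<in>A. \<exists>b\<in>B. (b + e) mod N \<notin> A")
    case True
    then obtain e b where e: "e \<in> A" "b \<in> B" "(b + e) mod N \<notin> A" by blast
    define A' where "A' = A \<union> (\<lambda>b. (b + e) mod N) ` B"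
    define B' where "B' = {b \<in> B. (b + e) mod N \<in> A}"
    have "B' \<subset> B" using e unfolding B'_def by blast
    then have "card B' < card B" using less.prems(2) by (simp add: psubset_card_mono)
    moreover have "0 \<in> B'" using e(1) less.prems(3,6) unfolding B'_def by auto
    moreover have "A' \<subseteq> {0..<N}" using less.prems(3) modulus_pos unfolding A'_def by auto
    moreover have "sumset_mod N A' B' \<subseteq> sumset_mod N A B"
      unfolding A'_def B'_def by (rule sumset_mod_dyson_transform_subset[OF e(1)])
    ultimately have "card A' + card B' \<le> card (sumset_mod N A' B') + 1"
      using less.prems unfolding A'_def B'_def
      by (intro less.hyps) (auto simp: B'_def)
    moreover have "card (sumset_mod N A' B') \<le> card (sumset_mod N A B)"
      using \<open>sumset_mod N A' B' \<subseteq> _\<close> fin by (rule card_mono[rotated])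
    moreover have "card A' + card B' = card A + card B"
      unfolding A'_def B'_def using less.prems(1,2,4) by (rule card_dyson_transform)
    ultimately show ?thesis by linarith
  next
    case False
    then have closed: "\<And>a b. a \<in> A \<Longrightarrow> b \<in> B \<Longrightarrow> (a + b) mod N \<in> A"
      by (metis add.commute)
    show ?thesis
    proof (cases "B \<subseteq> {0}")
      case True
      then have "card B \<le> 1" using card_mono[of "{0}" B] by simp
      moreover have "card A \<le> card (sumset_mod N A B)"
        using sumset_mod_superset_left[OF less.prems(6,3)] fin by (rule card_mono[rotated])
      ultimately show ?thesis by linarith
    next
      case False
      then obtain b where "b \<in> B" "b \<noteq> 0" by blast
      then have "0 < b" "b < N" using less.prems(4) by force+
      then obtain m where "(int m * b) mod N = h" using multiple_mod_eq by blast
      then have "h \<in> A" using multiple_mod_mem_if_closed[OF less.prems(5) closed[OF _ \<open>b \<in> B\<close>]]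
        by metis
      then have "(h + 0) mod N \<in> sumset_mod N A B" using less.prems(6) by (rule sumset_modI)
      moreover have "(h + 0) mod N = h" using \<open>h \<in> A\<close> less.prems(3) by auto
      ultimately show ?thesis using less.prems(7) by simp
    qed
  qed
qed

lemma exists_multiple_mod_pow2_eq_half:
  fixes b :: int
  assumes "0 < b" "b < 2 ^ k"
  shows "\<exists>m. (int m * b) mod 2 ^ k = 2 ^ (k - 1)"
  using assms
proof (induction k arbitrary: b)
  case 0
  then show ?case by simp
next
  case (Suc k)
  show ?case
  proof (cases "even b")
    case True
    then obtain c where c: "b = 2 * c" by blast
    with Suc.prems have "0 < c" "c < 2 ^ k" by auto
    then obtain m where m: "(int m * c) mod 2 ^ k = 2 ^ (k - 1)" using Suc.IH by blast
    have "k \<noteq> 0" using \<open>0 < c\<close> \<open>c < 2 ^ k\<close> by (cases k) auto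
    have "(int m * b) mod 2 ^ Suc k = 2 * ((int m * c) mod 2 ^ k)"
      using c by (simp add: mult.left_commute mod_mult_mult1)
    then show ?thesis using m \<open>k \<noteq> 0\<close> by (metis power_Suc diff_Suc_1 not0_implies_Suc)
  next
    case False
    have "(int (2 ^ k) * b) mod 2 ^ Suc k = 2 ^ k * (b mod 2)"
      by (simp add: mod_mult_mult1 mult.commute)
    then show ?thesis using False by (metis diff_Suc_1 mult.right_neutral odd_iff_mod_2_eq_one)
  qed
qed

lemma unavoidable_residue_pow2: "unavoidable_residue (2 ^ k) (2 ^ (k - 1))"
  using exists_multiple_mod_pow2_eq_half by unfold_locales simp_all

section \<open>Subset sums modulo \<open>N\<close>\<close>

definition subsum_residues :: "int \<Rightarrow> nat multiset \<Rightarrow> int set" where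
  "subsum_residues N T = {int (sum_mset A) mod N | A. A \<subseteq># T}"

definition signed_subsum_residues :: "int \<Rightarrow> nat multiset \<Rightarrow> int set" where
  "signed_subsum_residues N T =
     subsum_residues N T \<union> {- int (sum_mset A) mod N | A. A \<subseteq># T}"

lemma subsum_residuesI: "A \<subseteq># T \<Longrightarrow> int (sum_mset A) mod N \<in> subsum_residues N T"
  unfolding subsum_residues_def by blast

lemma subsum_residuesE:
  assumes "x \<in> subsum_residues N T"
  obtains A where "A \<subseteq># T" "x = int (sum_mset A) mod N"
  using assms unfolding subsum_residues_def by blast

lemma signed_subsum_residuesI:
  "A \<subseteq># T \<Longrightarrow> int (sum_mset A) mod N \<in> signed_subsum_residues N T"
  "A \<subseteq># T \<Longrightarrow> - int (sum_mset A) mod N \<in> signed_subsum_residues N T"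
  unfolding signed_subsum_residues_def subsum_residues_def by blast+

lemma signed_subsum_residuesE:
  assumes "x \<in> signed_subsum_residues N T"
  obtains (pos) A where "A \<subseteq># T" "x = int (sum_mset A) mod N"
    | (neg) A where "A \<subseteq># T" "x = - int (sum_mset A) mod N"
  using assms unfolding signed_subsum_residues_def subsum_residues_def by blast

lemma subsum_residues_subset_range: "0 < N \<Longrightarrow> subsum_residues N T \<subseteq> {0..<N}"
  unfolding subsum_residues_def by auto

lemma signed_subsum_residues_subset_range:
  "0 < N \<Longrightarrow> signed_subsum_residues N T \<subseteq> {0..<N}"
  unfolding signed_subsum_residues_def using subsum_residues_subset_range by auto

lemma finite_subsum_residues: "0 < N \<Longrightarrow> finite (subsum_residues N T)"
  using subsum_residues_subset_range finite_subset by blast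

lemma finite_signed_subsum_residues: "0 < N \<Longrightarrow> finite (signed_subsum_residues N T)"
  using signed_subsum_residues_subset_range finite_subset by blast

lemma zero_mem_subsum_residues: "0 \<in> subsum_residues N T"
  unfolding subsum_residues_def by (intro CollectI exI[of _ "{#}"]) simp

lemma zero_mem_signed_subsum_residues: "0 \<in> signed_subsum_residues N T"
  unfolding signed_subsum_residues_def using zero_mem_subsum_residues by blast

lemma signed_subsum_residues_mono:
  "T' \<subseteq># T \<Longrightarrow> signed_subsum_residues N T' \<subseteq> signed_subsum_residues N T"
  unfolding signed_subsum_residues_def subsum_residues_def
  by (blast intro: subset_mset.order_trans)

lemma subsum_residue_eq_neg_complement:
  assumes "A \<subseteq># P" "N dvd int (sum_mset P)"
  shows "int (sum_mset A) mod N = - int (sum_mset (P - A)) mod N"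
proof -
  have "sum_mset P = sum_mset A + sum_mset (P - A)"
    using assms(1) by (metis subset_mset.add_diff_inverse sum_mset.union)
  then show ?thesis using assms(2) by (simp add: mod_eq_dvd_iff)
qed

lemma signed_subsum_residues_zero_sum:
  assumes "N dvd int (sum_mset P)"
  shows "signed_subsum_residues N P = subsum_residues N P"
proof -
  have "- int (sum_mset A) mod N \<in> subsum_residues N P" if "A \<subseteq># P" for A
  proof -
    have "int (sum_mset (P - A)) mod N = - int (sum_mset A) mod N"
      using subsum_residue_eq_neg_complement[OF _ assms, of "P - A"] that
      by (simp add: subset_mset.diff_diff_right)
    then show ?thesis using subsum_residuesI[of "P - A" P N] by simp
  qed
  then show ?thesis unfolding signed_subsum_residues_def by blast
qed

lemma sumset_mod_subsum_residues_subset: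
  assumes "P \<subseteq># T" "N dvd int (sum_mset P)"
  shows "sumset_mod N (subsum_residues N P) (signed_subsum_residues N (T - P))
           \<subseteq> signed_subsum_residues N T"
proof
  fix z assume "z \<in> sumset_mod N (subsum_residues N P) (signed_subsum_residues N (T - P))"
  then obtain a b where a: "a \<in> subsum_residues N P"
    and b: "b \<in> signed_subsum_residues N (T - P)" and z: "z = (a + b) mod N"
    by (rule sumset_modE)
  from a obtain A where A: "A \<subseteq># P" "a = int (sum_mset A) mod N" by (rule subsum_residuesE)
  have T: "T = P + (T - P)" using assms(1) by simp
  from b show "z \<in> signed_subsum_residues N T"
  proof (cases rule: signed_subsum_residuesE)
    case (pos B)
    have "A + B \<subseteq># T" using A(1) pos(1) T by (metis subset_mset.add_mono)
    then have "int (sum_mset (A + B)) mod N \<in> signed_subsum_residues N T"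
      by (rule signed_subsum_residuesI)
    moreover have "z = int (sum_mset (A + B)) mod N" using z A(2) pos(2) by (simp add: mod_add_eq)
    ultimately show ?thesis by simp
  next
    case (neg B)
    have "a = - int (sum_mset (P - A)) mod N"
      using subsum_residue_eq_neg_complement[OF A(1) assms(2)] A(2) by simp
    then have "z = - int (sum_mset ((P - A) + B)) mod N" using z neg(2) by (simp add: mod_add_eq)
    moreover have "(P - A) + B \<subseteq># T"
      using neg(1) T by (metis subset_mset.add_mono diff_subset_eq_self)
    then have "- int (sum_mset ((P - A) + B)) mod N \<in> signed_subsum_residues N T"
      by (rule signed_subsum_residuesI)
    ultimately show ?thesis by simp
  qed
qed

lemma sum_list_take_split:
  "i \<le> j \<Longrightarrow> sum_list (take j xs) = sum_list (take i xs) + sum_list (drop i (take j xs))"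
  by (metis append_take_drop_id min.absorb1 sum_list_append take_take)

lemma mset_drop_take_subseteq: "mset (drop i (take j xs)) \<subseteq># mset xs"
proof -
  have "mset (drop i (take j xs)) \<subseteq># mset (take j xs)"
    by (metis append_take_drop_id mset_append mset_subset_eq_add_right)
  also have "\<dots> \<subseteq># mset xs" by (metis append_take_drop_id mset_append mset_subset_eq_add_left)
  finally show ?thesis .
qed

lemma sumset_mod_prefix_residues_subset:
  fixes xs :: "nat list"
  defines "p \<equiv> \<lambda>i. int (sum_list (take i xs))"
  shows "sumset_mod N ((\<lambda>i. p i mod N) ` I) ((\<lambda>i. - p i mod N) ` I)
           \<subseteq> signed_subsum_residues N (mset xs)"
proof
  fix z assume "z \<in> sumset_mod N ((\<lambda>i. p i mod N) ` I) ((\<lambda>i. - p i mod N) ` I)"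
  then obtain i j where z: "z = (p j - p i) mod N"
    by (auto elim!: sumset_modE simp: mod_add_eq)
  show "z \<in> signed_subsum_residues N (mset xs)"
  proof (cases "i \<le> j")
    case True
    then have "z = int (sum_mset (mset (drop i (take j xs)))) mod N"
      using z sum_list_take_split[of i j xs] by (simp add: p_def sum_mset_sum_list)
    then show ?thesis using signed_subsum_residuesI(1)[OF mset_drop_take_subseteq] by simp
  next
    case False
    then have "z = - int (sum_mset (mset (drop j (take i xs)))) mod N"
      using z sum_list_take_split[of j i xs] by (simp add: p_def sum_mset_sum_list)
    then show ?thesis using signed_subsum_residuesI(2)[OF mset_drop_take_subseteq] by simp
  qed
qed

lemma inj_on_prefix_residues:
  fixes xs :: "nat list"
  assumes "q \<le> length xs"
    and "\<And>A. A \<subseteq># mset xs \<Longrightarrow> A \<noteq> {#} \<Longrightarrow> N dvd int (sum_mset A) \<Longrightarrow> q < size A"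
  shows "inj_on (\<lambda>i. int (sum_list (take i xs)) mod N) {0..q}"
proof -
  have neq: "int (sum_list (take i xs)) mod N \<noteq> int (sum_list (take j xs)) mod N"
    if "i < j" "j \<le> q" for i j
  proof
    let ?A = "mset (drop i (take j xs))"
    assume "int (sum_list (take i xs)) mod N = int (sum_list (take j xs)) mod N"
    then have "N dvd int (sum_list (take j xs)) - int (sum_list (take i xs))"
      by (metis mod_eq_dvd_iff)
    moreover have "int (sum_list (take j xs)) - int (sum_list (take i xs)) = int (sum_mset ?A)"
      using sum_list_take_split[of i j xs] \<open>i < j\<close> by (simp add: sum_mset_sum_list)
    ultimately have "N dvd int (sum_mset ?A)" by simp
    moreover have size: "size ?A = j - i" using that assms(1) by simp
    then have "?A \<noteq> {#}" using \<open>i < j\<close> by auto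
    ultimately have "q < size ?A" using assms(2)[OF mset_drop_take_subseteq[of i j xs]] by blast
    then show False using size that by simp
  qed
  show ?thesis
  proof (rule inj_onI)
    fix i j assume "i \<in> {0..q}" "j \<in> {0..q}"
      and eq: "int (sum_list (take i xs)) mod N = int (sum_list (take j xs)) mod N"
    then show "i = j" using neq[of i j] neq[of j i] by (cases i j rule: linorder_cases) auto
  qed
qed

text \<open>
  Differences of the \<open>q + 1\<close> distinct prefix residues are block sums of either sign, so the
  bound \<open>card_sumset_mod_ge\<close> applied to the prefix residues and their negatives gives
  \<open>2 (q + 1) - 1\<close> signed residues.
\<close>

lemma (in unavoidable_residue) card_signed_subsum_residues_ge:
  assumes "h \<notin> signed_subsum_residues N T" "q \<le> size T"
    and "\<And>A. A \<subseteq># T \<Longrightarrow> A \<noteq> {#} \<Longrightarrow> N dvd int (sum_mset A) \<Longrightarrow> q < size A"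
  shows "2 * q + 1 \<le> card (signed_subsum_residues N T)"
proof -
  obtain xs where T: "T = mset xs" using ex_mset by metis
  define p where "p = (\<lambda>i. int (sum_list (take i xs)))"
  define U where "U = (\<lambda>i. p i mod N) ` {0..q}"
  define V where "V = (\<lambda>i. - p i mod N) ` {0..q}"
  have inj: "inj_on (\<lambda>i. p i mod N) {0..q}"
    unfolding p_def using assms(2,3) T by (intro inj_on_prefix_residues) simp_all
  then have "inj_on (\<lambda>i. - p i mod N) {0..q}"
    unfolding inj_on_def by (metis mod_minus_cong minus_minus)
  then have card: "card U = q + 1" "card V = q + 1"
    unfolding U_def V_def using inj by (simp_all add: card_image)
  have range: "U \<subseteq> {0..<N}" "V \<subseteq> {0..<N}"
    unfolding U_def V_def using modulus_pos by auto
  have zero: "0 \<in> U" "0 \<in> V"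
    unfolding U_def V_def p_def by (force intro: image_eqI[where x = 0])+
  have sub: "sumset_mod N U V \<subseteq> signed_subsum_residues N T"
    unfolding U_def V_def p_def T by (rule sumset_mod_prefix_residues_subset)
  have "card U + card V \<le> card (sumset_mod N U V) + 1"
    using range zero sub assms(1) unfolding U_def V_def
    by (intro card_sumset_mod_ge) auto
  also have "card (sumset_mod N U V) \<le> card (signed_subsum_residues N T)"
    using sub finite_signed_subsum_residues[OF modulus_pos] by (rule card_mono[rotated])
  finally show ?thesis using card by simp
qed

lemma (in unavoidable_residue) card_subsum_residues_shortest_zero_sum:
  assumes "h \<notin> signed_subsum_residues N P" "P \<noteq> {#}" "N dvd int (sum_mset P)"
    and "\<And>A. A \<subseteq># P \<Longrightarrow> A \<noteq> {#} \<Longrightarrow> N dvd int (sum_mset A) \<Longrightarrow> size P \<le> size A"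
  shows "2 * size P \<le> card (subsum_residues N P) + 1"
proof -
  have "size P \<noteq> 0" using assms(2) by simp
  have "2 * (size P - 1) + 1 \<le> card (signed_subsum_residues N P)"
  proof (rule card_signed_subsum_residues_ge[OF assms(1)])
    show "size P - 1 < size A" if "A \<subseteq># P" "A \<noteq> {#}" "N dvd int (sum_mset A)" for A
      using assms(4)[OF that] \<open>size P \<noteq> 0\<close> by linarith
  qed simp
  then show ?thesis using signed_subsum_residues_zero_sum[OF assms(3)] \<open>size P \<noteq> 0\<close> by simp
qed

lemma (in unavoidable_residue) zero_sum_blocks:
  assumes "h \<notin> signed_subsum_residues N T"
  shows "\<exists>F. sum_mset F \<subseteq># T \<and> (\<forall>A\<in>#F. A \<noteq> {#} \<and> N dvd int (sum_mset A))
             \<and> 2 * size T + 1 \<le> card (signed_subsum_residues N T) + 2 * size F"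
  using assms
proof (induction "size T" arbitrary: T rule: less_induct)
  case less
  let ?zero_sum = "\<lambda>A. A \<subseteq># T \<and> A \<noteq> {#} \<and> N dvd int (sum_mset A)"
  show ?case
  proof (cases "\<exists>A. ?zero_sum A")
    case False
    then have "2 * size T + 1 \<le> card (signed_subsum_residues N T)"
      using less.prems by (intro card_signed_subsum_residues_ge) auto
    then show ?thesis by (intro exI[of _ "{#}"]) simp
  next
    case True
    then obtain P where P: "P \<subseteq># T" "P \<noteq> {#}" "N dvd int (sum_mset P)"
      and P_min: "\<And>A. ?zero_sum A \<Longrightarrow> size P \<le> size A"
      using ex_has_least_nat[of ?zero_sum _ size] by metis
    define T' where "T' = T - P"
    have T: "T = P + T'" using P(1) unfolding T'_def by simp
    have "size P \<noteq> 0" using P(2) by simp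
    have "h \<notin> signed_subsum_residues N P"
      using less.prems signed_subsum_residues_mono[OF P(1)] by blast
    then have card_P: "2 * size P \<le> card (subsum_residues N P) + 1"
      using P(2,3) by (rule card_subsum_residues_shortest_zero_sum)
        (use P(1) P_min in \<open>blast intro: subset_mset.order_trans\<close>)
    have size_T: "size T = size P + size T'" using T by simp
    then have "size T' < size T" using \<open>size P \<noteq> 0\<close> by linarith
    moreover have "h \<notin> signed_subsum_residues N T'"
      using less.prems signed_subsum_residues_mono[of T' T] T by auto
    ultimately obtain F' where F': "sum_mset F' \<subseteq># T'"
      "\<forall>A\<in>#F'. A \<noteq> {#} \<and> N dvd int (sum_mset A)"
      "2 * size T' + 1 \<le> card (signed_subsum_residues N T') + 2 * size F'"
      using less.hyps by blast
    have sub: "sumset_mod N (subsum_residues N P) (signed_subsum_residues N T')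
                 \<subseteq> signed_subsum_residues N T"
      unfolding T'_def by (rule sumset_mod_subsum_residues_subset[OF P(1,3)])
    have "card (subsum_residues N P) + card (signed_subsum_residues N T')
            \<le> card (sumset_mod N (subsum_residues N P) (signed_subsum_residues N T')) + 1"
      using sub less.prems modulus_pos
      by (intro card_sumset_mod_ge subsum_residues_subset_range signed_subsum_residues_subset_range
          zero_mem_subsum_residues zero_mem_signed_subsum_residues finite_subsum_residues
          finite_signed_subsum_residues)
        auto
    also have "\<dots> \<le> card (signed_subsum_residues N T) + 1"
      using sub finite_signed_subsum_residues[OF modulus_pos] by (simp add: card_mono)
    finally have "2 * size T + 1 \<le> card (signed_subsum_residues N T) + 2 * size (add_mset P F')"
      using card_P F'(3) size_T by simp
    moreover have "sum_mset (add_mset P F') \<subseteq># T" using F'(1) T by simp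
    ultimately show ?thesis using P(2,3) F'(2) by (intro exI[of _ "add_mset P F'"]) auto
  qed
qed

lemma half_notin_signed_subsum_residues:
  fixes T :: "nat multiset"
  assumes "1 \<le> k" and no_half: "\<And>A. A \<subseteq># T \<Longrightarrow> sum_mset A mod 2 ^ k \<noteq> 2 ^ (k - 1)"
  shows "2 ^ (k - 1) \<notin> signed_subsum_residues (2 ^ k) T"
proof
  have "(2::int) ^ k = 2 * 2 ^ (k - 1)" using assms(1) by (cases k) auto
  then have neg_half: "- (2 ^ (k - 1)) mod 2 ^ k = (2::int) ^ (k - 1)"
    by (metis minus_1_mod_2_eq mod_mult_mult2 mult_1 mult_minus_left)
  assume "2 ^ (k - 1) \<in> signed_subsum_residues (2 ^ k) T"
  then obtain A where A: "A \<subseteq># T" "int (sum_mset A) mod 2 ^ k = 2 ^ (k - 1)"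
  proof (cases rule: signed_subsum_residuesE)
    case (neg A)
    then have "int (sum_mset A) mod 2 ^ k = - (2 ^ (k - 1)) mod 2 ^ k"
      using mod_minus_eq[of "- int (sum_mset A)" "2 ^ k"] by simp
    then show ?thesis using neg(1) neg_half that by simp
  qed (use that in simp)
  then have "int (sum_mset A mod 2 ^ k) = int (2 ^ (k - 1))" by (simp add: of_nat_mod)
  then show False using no_half[OF A(1)] by (simp only: of_nat_eq_iff)
qed

lemma zero_sum_blocks_pow2:
  fixes T :: "nat multiset"
  assumes "1 \<le> k" and no_half: "\<And>A. A \<subseteq># T \<Longrightarrow> sum_mset A mod 2 ^ k \<noteq> 2 ^ (k - 1)"
  shows "\<exists>F. sum_mset F \<subseteq># T \<and> (\<forall>A\<in>#F. A \<noteq> {#} \<and> 2 ^ k dvd sum_mset A)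
             \<and> size T + 1 \<le> size F + 2 ^ (k - 1)"
proof -
  interpret unavoidable_residue "2 ^ k" "2 ^ (k - 1)" by (rule unavoidable_residue_pow2)
  have pow: "(2::int) ^ k = 2 * 2 ^ (k - 1)" using assms(1) by (cases k) auto
  have half_notin: "2 ^ (k - 1) \<notin> signed_subsum_residues (2 ^ k) T"
    using assms by (rule half_notin_signed_subsum_residues)
  obtain F where F: "sum_mset F \<subseteq># T" "\<forall>A\<in>#F. A \<noteq> {#} \<and> (2::int) ^ k dvd int (sum_mset A)"
    "2 * size T + 1 \<le> card (signed_subsum_residues (2 ^ k) T) + 2 * size F"
    using zero_sum_blocks[OF half_notin] by blast
  have "signed_subsum_residues (2 ^ k) T \<subseteq> {0..<2 ^ k} - {2 ^ (k - 1)}"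
    using signed_subsum_residues_subset_range[OF modulus_pos] half_notin by blast
  then have "card (signed_subsum_residues (2 ^ k) T) \<le> card ({0..<(2::int) ^ k} - {2 ^ (k - 1)})"
    by (intro card_mono) auto
  also have "\<dots> = 2 ^ k - 1"
  proof -
    have "2 ^ (k - 1) \<in> {0..<(2::int) ^ k}" using pow by simp
    then show ?thesis by (simp add: card_Diff_singleton nat_power_eq)
  qed
  finally have "card (signed_subsum_residues (2 ^ k) T) \<le> 2 ^ k - 1" .
  moreover have "(2::nat) ^ k = 2 * 2 ^ (k - 1)" using assms(1) by (cases k) auto
  ultimately have "size T + 1 \<le> size F + 2 ^ (k - 1)" using F(3) by linarith
  moreover have "\<forall>A\<in>#F. A \<noteq> {#} \<and> 2 ^ k dvd sum_mset A"
    using F(2) by (metis of_nat_dvd_iff of_nat_numeral of_nat_power)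
  ultimately show ?thesis using F(1) by blast
qed

section \<open>Layers and the index sets \<open>I_d\<close>\<close>

text \<open>
  \<open>\<Sigma>*S \<subseteq> \<Union>i\<in>I. L_i\<close> without the ambient modulus \<open>2^n\<close>, which only enters through
  \<open>i \<le> n\<close> (\<open>mod_mem_layer_iff\<close>).
\<close>

definition subsums_in_layers :: "nat set \<Rightarrow> nat multiset \<Rightarrow> bool" where
  "subsums_in_layers I S \<longleftrightarrow>
     (\<forall>A. A \<subseteq># S \<longrightarrow> A \<noteq> {#} \<longrightarrow> (\<exists>i\<in>I. sum_mset A mod 2 ^ i = 2 ^ (i - 1)))"

lemma subsums_in_layersD:
  "subsums_in_layers I S \<Longrightarrow> A \<subseteq># S \<Longrightarrow> A \<noteq> {#} \<Longrightarrow> \<exists>i\<in>I. sum_mset A mod 2 ^ i = 2 ^ (i - 1)"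
  unfolding subsums_in_layers_def by blast

lemma subsums_in_layers_mono:
  assumes "subsums_in_layers I S" "S' \<subseteq># S" "I \<subseteq> J"
  shows "subsums_in_layers J S'"
  unfolding subsums_in_layers_def
  using subsums_in_layersD[OF assms(1) subset_mset.order_trans[OF _ assms(2)]] assms(3) by blast

lemma mod_pow2_eq_half_unique:
  fixes x :: nat
  assumes "x mod 2 ^ i = 2 ^ (i - 1)" "x mod 2 ^ j = 2 ^ (j - 1)"
  shows "i = j"
proof -
  have lower: "x mod 2 ^ a = 0" if "x mod 2 ^ b = 2 ^ (b - 1)" "a < b" for a b
  proof -
    have "x mod 2 ^ a = (x mod 2 ^ b) mod 2 ^ a"
      using \<open>a < b\<close> by (simp add: mod_mod_cancel le_imp_power_dvd)
    also have "\<dots> = 0" using that by (simp add: le_imp_power_dvd)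
    finally show ?thesis .
  qed
  show ?thesis using lower[OF assms(1), of j] lower[OF assms(2), of i] assms
    by (cases i j rule: linorder_cases) auto
qed

lemma mod_pow2_eq_half_div:
  fixes x :: nat
  assumes "2 ^ k dvd x" "x mod 2 ^ i = 2 ^ (i - 1)"
  shows "k < i" "(x div 2 ^ k) mod 2 ^ (i - k) = 2 ^ (i - k - 1)"
proof -
  show "k < i"
  proof (rule ccontr)
    assume "\<not> k < i"
    then have "2 ^ i dvd x" using assms(1) by (meson dvd_trans le_imp_power_dvd not_less)
    then show False using assms(2) by simp
  qed
  then obtain j where i: "i = k + j" "0 < j" by (metis less_imp_add_positive)
  obtain y where x: "x = 2 ^ k * y" using assms(1) by blast
  have "i - 1 = k + (j - 1)" using i by simp
  have "2 ^ k * (y mod 2 ^ j) = x mod 2 ^ i" by (simp add: x i power_add mod_mult_mult1)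
  also have "\<dots> = 2 ^ k * 2 ^ (j - 1)" using assms(2) \<open>i - 1 = k + (j - 1)\<close> by (simp add: power_add)
  finally show "(x div 2 ^ k) mod 2 ^ (i - k) = 2 ^ (i - k - 1)" using x i by simp
qed

lemma subsums_in_layers_avoid:
  assumes "subsums_in_layers I S" "A \<subseteq># S" "k \<notin> I"
  shows "sum_mset A mod 2 ^ k \<noteq> 2 ^ (k - 1)"
proof
  assume half: "sum_mset A mod 2 ^ k = 2 ^ (k - 1)"
  then have "A \<noteq> {#}" by auto
  then obtain i where "i \<in> I" "sum_mset A mod 2 ^ i = 2 ^ (i - 1)"
    using subsums_in_layersD[OF assms(1,2)] by blast
  then show False using mod_pow2_eq_half_unique[OF _ half] assms(3) by blast
qed

lemma sum_mset_block_quotients: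
  fixes F :: "nat multiset multiset"
  assumes "\<forall>A\<in>#F. c dvd sum_mset A"
  shows "c * sum_mset (image_mset (\<lambda>A. sum_mset A div c) F) = sum_mset (sum_mset F)"
  using assms by (induction F) (simp_all add: distrib_left)

lemma member_subset_sum_mset: "A \<in># F \<Longrightarrow> A \<subseteq># sum_mset F"
proof -
  assume "A \<in># F"
  then obtain F' where "F = add_mset A F'" by (blast dest: multi_member_split)
  then show ?thesis by simp
qed

lemma subsums_in_layers_quotient:
  assumes "subsums_in_layers I S" "sum_mset F \<subseteq># S"
    and blocks: "\<forall>A\<in>#F. A \<noteq> {#} \<and> 2 ^ k dvd sum_mset A"
  shows "subsums_in_layers {j. j + k \<in> I} (image_mset (\<lambda>A. sum_mset A div 2 ^ k) F)"
  unfolding subsums_in_layers_def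
proof (intro allI impI)
  let ?q = "\<lambda>A. sum_mset A div 2 ^ k"
  fix U assume U: "U \<subseteq># image_mset ?q F" "U \<noteq> {#}"
  then have "image_mset ?q F = U + (image_mset ?q F - U)" by simp
  then obtain F1 F2 where F: "F = F1 + F2" and U_eq: "U = image_mset ?q F1"
    using image_mset_eq_plusD by blast
  let ?B = "sum_mset F1"
  have "?B \<subseteq># sum_mset F" using F by simp
  then have "?B \<subseteq># S" using assms(2) by (rule subset_mset.order_trans)
  moreover obtain A where "A \<in># F1" using U(2) U_eq by fastforce
  then have "?B \<noteq> {#}" using blocks F member_subset_sum_mset[of A F1] by fastforce
  ultimately obtain i where "i \<in> I" and i: "sum_mset ?B mod 2 ^ i = 2 ^ (i - 1)"
    using subsums_in_layersD[OF assms(1)] by blast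
  have sum_U: "2 ^ k * sum_mset U = sum_mset ?B"
    unfolding U_eq using blocks F by (intro sum_mset_block_quotients) simp
  then have "2 ^ k dvd sum_mset ?B" "sum_mset U = sum_mset ?B div 2 ^ k"
    by (metis dvd_triv_left, metis nonzero_mult_div_cancel_left power_not_zero zero_neq_numeral)
  then have "k < i" "(sum_mset U) mod 2 ^ (i - k) = 2 ^ (i - k - 1)"
    using mod_pow2_eq_half_div[OF _ i] by simp_all
  then show "\<exists>j\<in>{j. j + k \<in> I}. sum_mset U mod 2 ^ j = 2 ^ (j - 1)"
    using \<open>i \<in> I\<close> by (intro bexI[of _ "i - k"]) simp_all
qed

declare Iset.simps [simp del]

lemma Iset_le_1: "d \<le> 1 \<Longrightarrow> Iset d = {}"
  by (simp add: Iset.simps)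

lemma Iset_rec:
  "2 \<le> d \<Longrightarrow>
     Iset d = {1..floor_log d} \<union> (\<lambda>j. j + floor_log d + 1) ` Iset (d - 2 ^ floor_log d + 1)"
  by (simp add: Iset.simps)

lemma floor_log_bounds:
  assumes "2 \<le> d"
  shows "1 \<le> floor_log d" "2 ^ floor_log d \<le> d" "d < 2 * 2 ^ floor_log d"
  using assms floor_log_rec[OF assms] floor_log_exp2_le[of d] floor_log_exp2_gt[of d] by auto

lemma Iset_rec_arg_less: "2 \<le> d \<Longrightarrow> d - 2 ^ floor_log d + 1 < d"
  using floor_log_bounds[of d] power_increasing[of 1 "floor_log d" "2::nat"] by simp

lemma Iset_pos: "i \<in> Iset d \<Longrightarrow> 0 < i"
proof (induction d arbitrary: i rule: less_induct)
  case (less d)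
  then show ?case
    by (cases "2 \<le> d") (auto simp: Iset_rec Iset_le_1 dest: Iset_rec_arg_less)
qed

lemma Iset_2: "Iset 2 = {1}"
  by (simp add: Iset_rec Iset_le_1 floor_log_rec)

lemma Iset_le: "i \<in> Iset d \<Longrightarrow> i \<le> d"
proof (induction d arbitrary: i rule: less_induct)
  case (less d)
  show ?case
  proof (cases "2 \<le> d")
    case False
    then show ?thesis using less.prems Iset_le_1 by simp
  next
    case True
    define l where "l = floor_log d"
    define d' where "d' = d - 2 ^ l + 1"
    have l: "1 \<le> l" "2 ^ l \<le> d" "d < 2 * 2 ^ l" using floor_log_bounds[OF True] unfolding l_def by auto
    from less.prems consider "i \<le> l" | j where "j \<in> Iset d'" "i = j + l + 1"
      unfolding Iset_rec[OF True] l_def d'_def by fastforce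
    then show ?thesis
    proof cases
      case 1
      then show ?thesis using less_exp[of l] l(2) by linarith
    next
      case (2 j)
      have "j \<le> d'" using less.IH[OF _ 2(1)] Iset_rec_arg_less[OF True] unfolding d'_def l_def by blast
      show ?thesis
      proof (cases "l = 1")
        case True
        \<comment> \<open>here \<open>l + 2 \<le> 2^l\<close> fails, but then \<open>d = 3\<close> and \<open>Iset 2 = {1}\<close>\<close>
        then have "d' = d - 1" "d \<le> 3" using l unfolding d'_def by auto
        moreover have "\<not> d' \<le> 1" using 2(1) Iset_le_1 by auto
        ultimately have "d' = 2" "d = 3" by auto
        then show ?thesis using 2 Iset_2 True by simp
      next
        case False
        have "m + 2 \<le> (2::nat) ^ m" if "2 \<le> m" for m
          using that by (induction m rule: nat_induct_at_least) auto
        then have "l + 2 \<le> 2 ^ l" using False l(1) by simp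
        then show ?thesis using 2(2) \<open>j \<le> d'\<close> l unfolding d'_def by linarith
      qed
    qed
  qed
qed

lemma floor_log_Suc_notin_Iset: "2 \<le> d \<Longrightarrow> floor_log d + 1 \<notin> Iset d"
  using Iset_pos by (fastforce simp: Iset_rec)

lemma Iset_shift_subset:
  "2 \<le> d \<Longrightarrow> {j. j + (floor_log d + 1) \<in> Iset d} \<subseteq> Iset (d - 2 ^ floor_log d + 1)"
  by (auto simp: Iset_rec)

lemma ex_subset_mset_size: "n \<le> size M \<Longrightarrow> \<exists>M'. M' \<subseteq># M \<and> size M' = n"
proof -
  assume "n \<le> size M"
  obtain xs where "M = mset xs" using ex_mset by metis
  then have "mset (take n xs) \<subseteq># M" "size (mset (take n xs)) = n"
    using mset_drop_take_subseteq[of 0 n xs] \<open>n \<le> size M\<close> by simp_all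
  then show ?thesis by blast
qed

theorem not_subsums_in_layers_Iset:
  assumes "S \<noteq> {#}"
  shows "\<not> subsums_in_layers (Iset (size S)) S"
  using assms
proof (induction "size S" arbitrary: S rule: less_induct)
  case less
  define d where "d = size S"
  show ?case
  proof (cases "2 \<le> d")
    case False
    then show ?thesis
      using less.prems Iset_le_1[of d] unfolding subsums_in_layers_def d_def by auto
  next
    case True
    define l where "l = floor_log d"
    define d' where "d' = d - 2 ^ l + 1"
    show ?thesis
    proof
      assume layers: "subsums_in_layers (Iset (size S)) S"
      have "\<And>A. A \<subseteq># S \<Longrightarrow> sum_mset A mod 2 ^ (l + 1) \<noteq> 2 ^ (l + 1 - 1)"
        using subsums_in_layers_avoid[OF layers] floor_log_Suc_notin_Iset[OF True]
        unfolding d_def l_def by blast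
      then obtain F where F: "sum_mset F \<subseteq># S" "\<forall>A\<in>#F. A \<noteq> {#} \<and> 2 ^ (l + 1) dvd sum_mset A"
        "size S + 1 \<le> size F + 2 ^ l"
        using zero_sum_blocks_pow2[of "l + 1" S] by auto
      define S' where "S' = image_mset (\<lambda>A. sum_mset A div 2 ^ (l + 1)) F"
      have "subsums_in_layers {j. j + (l + 1) \<in> Iset d} S'"
        unfolding S'_def d_def using subsums_in_layers_quotient[OF layers F(1,2)] .
      then have layers': "subsums_in_layers (Iset d') S'"
        using Iset_shift_subset[OF True] unfolding d'_def l_def
        by (rule subsums_in_layers_mono[OF _ subset_mset.order_refl])
      have "d' \<le> size S'"
        using F(3) floor_log_bounds(2)[OF True] unfolding S'_def d'_def l_def d_def by simp
      then obtain S'' where S'': "S'' \<subseteq># S'" "size S'' = d'" using ex_subset_mset_size by blast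
      have "d' < size S" "0 < d'"
        using Iset_rec_arg_less[OF True] unfolding d'_def l_def d_def by simp_all
      moreover have "subsums_in_layers (Iset (size S'')) S''"
        using layers' S'' by (auto intro: subsums_in_layers_mono)
      ultimately show False using less.hyps S''(2) by fastforce
    qed
  qed
qed

lemma mod_mem_layer_iff:
  "i \<le> n \<Longrightarrow> x mod 2 ^ n \<in> layer n i \<longleftrightarrow> x mod 2 ^ i = 2 ^ (i - 1)"
  unfolding layer_def by (simp add: mod_mod_cancel le_imp_power_dvd)

lemma subsums_in_layers_if_subset_Cset:
  assumes "subsums n S \<subseteq> Cset n d" "\<forall>i\<in>Iset d. i \<le> n"
  shows "subsums_in_layers (Iset d) S"
  unfolding subsums_in_layers_def
proof (intro allI impI)
  fix A assume "A \<subseteq># S" "A \<noteq> {#}"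
  then have "sum_mset A mod 2 ^ n \<in> Cset n d"
    using assms(1) unfolding subsums_def by blast
  then obtain i where "i \<in> Iset d" "sum_mset A mod 2 ^ n \<in> layer n i"
    unfolding Cset_def by blast
  then show "\<exists>i\<in>Iset d. sum_mset A mod 2 ^ i = 2 ^ (i - 1)"
    using mod_mem_layer_iff assms(2) by blast
qed

theorem claim3p1:
  fixes d n :: nat
  assumes "0 < d" and "d \<le> n"
  shows "\<not> (\<exists>S :: nat multiset. size S = d \<and> set_mset S \<subseteq> {..<2^n} \<and> subsums n S \<subseteq> Cset n d)"
proof
  assume "\<exists>S :: nat multiset. size S = d \<and> set_mset S \<subseteq> {..<2^n} \<and> subsums n S \<subseteq> Cset n d"
  \<comment> \<open>the elements of \<open>S\<close> need not be reduced modulo \<open>2^n\<close>\<close>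
  then obtain S :: "nat multiset" where S: "size S = d" "subsums n S \<subseteq> Cset n d" by blast
  have "\<forall>i\<in>Iset d. i \<le> n" using Iset_le assms(2) by fastforce
  then have "subsums_in_layers (Iset (size S)) S"
    using S by (simp add: subsums_in_layers_if_subset_Cset)
  moreover have "S \<noteq> {#}" using S(1) assms(1) by auto
  ultimately show False using not_subsums_in_layers_Iset by blast
qed

end
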